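(* Fix $p\in[0,\infty]$, a dynamic monetary risk measure $(R_t)_{t=0}^{T-1}$, a dynamic monetary utility function $(U_t)_{t=0}^{T-1}$, $\eta_t\in L^0(\mathcal{F}_t)$ with $\eta_t>0$, and $W_t$ as in the context. For $t\in\{1,\dots,T\}$ define $\phi_{t,T}:\mathcal{R}^p_{t,T}\to L^p(\mathcal{F}_t)$ by $$\phi_{t,T}(Y):=-W_t\circ\dots\circ W_{T-1}(-Y_T)$$ (for $t=T$ the empty composition is the identity). Then each $\phi_{t,T}$ satisfies: $\phi_{t,T}(0)=0$; $\phi_{t,T}(Y)\le\phi_{t,T}(\widetilde Y)$ for all $Y,\widetilde Y\in\mathcal{R}^p_{t,T}$ with $Y\le\widetilde Y$ (componentwise); and $\phi_{t,T}(Y+m1_{[t,T]})=\phi_{t,T}(Y)+m$ for all $Y\in\mathcal{R}^p_{t,T}$ and $m\in L^p(\mathcal{F}_t)$. Moreover, $(\phi_{t,T})_{t=1}^T$ is time-consistent in the sense that $$\phi_{t,T}(Y)=\phi_{t,T}\big(Y1_{[t,u)}+\phi_{u,T}(Y)1_{[u,T]}\big)$$ for every $t\le u\le T$ and all $Y\in\mathcal{R}^p_{t,T}$.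
   Context: Let $T\ge 1$ and $(\Omega,\mathcal{F},\mathbb{F},\mathbb{P})$ a filtered probability space with $\mathbb{F}=(\mathcal{F}_t)_{t=0}^T$, $\{\emptyset,\Omega\}=\mathcal{F}_0\subseteq\dots\subseteq\mathcal{F}_T=\mathcal{F}$. $L^0(\mathcal{F}_t)$: real $\mathcal{F}_t$-measurable random variables; $L^p(\mathcal{F}_t)$ ($p\in(0,\infty)$): those with $\mathbb{E}|Y|^p<\infty$; $L^\infty(\mathcal{F}_t)$: essentially bounded ones; $L^p_+$: nonnegative elements. (In)equalities are a.s.; $x_+=\max(x,0)$. A dynamic monetary risk measure: maps $R_t:L^p(\mathcal{F}_{t+1})\to L^p(\mathcal{F}_t)$, $t=0,\dots,T-1$, with $R_t(Y+\lambda)=R_t(Y)-\lambda$ ($\lambda\in L^p(\mathcal{F}_t)$), $Y\le\widetilde Y\Rightarrow R_t(Y)\ge R_t(\widetilde Y)$, $R_t(cY)=cR_t(Y)$ ($c\in L^p_+(\mathcal{F}_t)$). A dynamic monetary utility function: maps $U_t:L^p(\mathcal{F}_{t+1})\to L^p(\mathcal{F}_t)$ with $U_t(Y+\lambda)=U_t(Y)+\lambda$, $Y\le\widetilde Y\Rightarrow U_t(Y)\le U_t(\widetilde Y)$, $U_t(cY)=cU_t(Y)$. $W_t(Y):=R_t(-Y)-\frac{1}{1+\eta_t}U_t((R_t(-Y)-Y)_+)$ for $Y\in L^p(\mathcal{F}_{t+1})$. $\mathcal{R}^p_{1,T}$ is the space of $\mathbb{F}$-adapted processes $(Y_s)_{s=1}^T$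 with $Y_s\in L^p(\mathcal{F}_s)$. For $1\le u\le v\le T$, $\pi_{u,v}:\mathcal{R}^p_{1,T}\to\mathcal{R}^p_{1,T}$ is $\pi_{u,v}(Y)_s:=1_{u\le s}Y_{s\wedge v}$, and $\mathcal{R}^p_{u,v}:=\pi_{u,v}\mathcal{R}^p_{1,T}$. For a process $Y$ and an interval $I$, $Y1_I$ is the process $s\mapsto 1_{s\in I}Y_s$, and for a random variable $m$, $m1_I$ is the process $s\mapsto 1_{s\in I}m$. *)

theory Defs
  imports "HOL-Probability.Probability"
begin

text \<open>Random variables are represented by functions; (in)equalities are almost sure (AE w.r.t. M).
  A sigma-algebra of the filtration is a measure F t on the same space as M.\<close>

definition filtered_prob_space :: "'a measure \<Rightarrow> (nat \<Rightarrow> 'a measure) \<Rightarrow> nat \<Rightarrow> bool" where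
  "filtered_prob_space M F T \<longleftrightarrow>
     prob_space M \<and>
     (\<forall>t\<le>T. space (F t) = space M \<and> sets (F t) \<subseteq> sets M) \<and>
     (\<forall>s t. s \<le> t \<longrightarrow> t \<le> T \<longrightarrow> sets (F s) \<subseteq> sets (F t)) \<and>
     sets (F 0) = {{}, space M} \<and> sets (F T) = sets M"

definition Lp :: "'a measure \<Rightarrow> 'a measure \<Rightarrow> ennreal \<Rightarrow> ('a \<Rightarrow> real) set" where
  "Lp M N p = {Y. Y \<in> borel_measurable N \<and>
      (p = 0 \<or>
       (p = \<infinity> \<and> (\<exists>C. AE x in M. \<bar>Y x\<bar> \<le> C)) \<or>
       (0 < p \<and> p < \<infinity> \<and> integrable M (\<lambda>x. \<bar>Y x\<bar> powr enn2real p)))}"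

definition dyn_risk_measure ::
  "'a measure \<Rightarrow> (nat \<Rightarrow> 'a measure) \<Rightarrow> nat \<Rightarrow> ennreal \<Rightarrow> (nat \<Rightarrow> ('a \<Rightarrow> real) \<Rightarrow> ('a \<Rightarrow> real)) \<Rightarrow> bool" where
  "dyn_risk_measure M F T p R \<longleftrightarrow> (\<forall>t<T.
     (\<forall>Y\<in>Lp M (F (Suc t)) p. R t Y \<in> Lp M (F t) p) \<and>
     (\<forall>Y\<in>Lp M (F (Suc t)) p. \<forall>l\<in>Lp M (F t) p.
        AE x in M. R t (\<lambda>w. Y w + l w) x = R t Y x - l x) \<and>
     (\<forall>Y\<in>Lp M (F (Suc t)) p. \<forall>Y'\<in>Lp M (F (Suc t)) p.
        (AE x in M. Y x \<le> Y' x) \<longrightarrow> (AE x in M. R t Y x \<ge> R t Y' x)) \<and>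
     (\<forall>Y\<in>Lp M (F (Suc t)) p. \<forall>c\<in>Lp M (F t) p.
        (AE x in M. c x \<ge> 0) \<longrightarrow> (\<lambda>w. c w * Y w) \<in> Lp M (F (Suc t)) p \<longrightarrow>
        (AE x in M. R t (\<lambda>w. c w * Y w) x = c x * R t Y x)))"

definition dyn_utility ::
  "'a measure \<Rightarrow> (nat \<Rightarrow> 'a measure) \<Rightarrow> nat \<Rightarrow> ennreal \<Rightarrow> (nat \<Rightarrow> ('a \<Rightarrow> real) \<Rightarrow> ('a \<Rightarrow> real)) \<Rightarrow> bool" where
  "dyn_utility M F T p U \<longleftrightarrow> (\<forall>t<T.
     (\<forall>Y\<in>Lp M (F (Suc t)) p. U t Y \<in> Lp M (F t) p) \<and>
     (\<forall>Y\<in>Lp M (F (Suc t)) p. \<forall>l\<in>Lp M (F t) p.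
        AE x in M. U t (\<lambda>w. Y w + l w) x = U t Y x + l x) \<and>
     (\<forall>Y\<in>Lp M (F (Suc t)) p. \<forall>Y'\<in>Lp M (F (Suc t)) p.
        (AE x in M. Y x \<le> Y' x) \<longrightarrow> (AE x in M. U t Y x \<le> U t Y' x)) \<and>
     (\<forall>Y\<in>Lp M (F (Suc t)) p. \<forall>c\<in>Lp M (F t) p.
        (AE x in M. c x \<ge> 0) \<longrightarrow> (\<lambda>w. c w * Y w) \<in> Lp M (F (Suc t)) p \<longrightarrow>
        (AE x in M. U t (\<lambda>w. c w * Y w) x = c x * U t Y x)))"

definition Wmap :: "(nat \<Rightarrow> ('a \<Rightarrow> real) \<Rightarrow> ('a \<Rightarrow> real)) \<Rightarrow> (nat \<Rightarrow> ('a \<Rightarrow> real) \<Rightarrow> ('a \<Rightarrow> real))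
    \<Rightarrow> (nat \<Rightarrow> 'a \<Rightarrow> real) \<Rightarrow> nat \<Rightarrow> ('a \<Rightarrow> real) \<Rightarrow> ('a \<Rightarrow> real)" where
  "Wmap R U \<eta> t Y = (\<lambda>x. R t (\<lambda>w. - Y w) x
      - (1 / (1 + \<eta> t x)) * U t (\<lambda>w. max (R t (\<lambda>v. - Y v) w - Y w) 0) x)"

primrec Witer :: "(nat \<Rightarrow> ('a \<Rightarrow> real) \<Rightarrow> ('a \<Rightarrow> real)) \<Rightarrow> nat \<Rightarrow> nat \<Rightarrow> ('a \<Rightarrow> real) \<Rightarrow> ('a \<Rightarrow> real)" where
  "Witer W t 0 = id"
| "Witer W t (Suc k) = W t \<circ> Witer W (Suc t) k"

definition phi :: "(nat \<Rightarrow> ('a \<Rightarrow> real) \<Rightarrow> ('a \<Rightarrow> real)) \<Rightarrow> (nat \<Rightarrow> ('a \<Rightarrow> real) \<Rightarrow> ('a \<Rightarrow> real))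
    \<Rightarrow> (nat \<Rightarrow> 'a \<Rightarrow> real) \<Rightarrow> nat \<Rightarrow> nat \<Rightarrow> (nat \<Rightarrow> 'a \<Rightarrow> real) \<Rightarrow> ('a \<Rightarrow> real)" where
  "phi R U \<eta> T t Y = (\<lambda>x. - Witer (Wmap R U \<eta>) t (T - t) (\<lambda>w. - Y T w) x)"

definition Rp :: "'a measure \<Rightarrow> (nat \<Rightarrow> 'a measure) \<Rightarrow> ennreal \<Rightarrow> nat \<Rightarrow> nat \<Rightarrow> (nat \<Rightarrow> 'a \<Rightarrow> real) set" where
  "Rp M F p T t = {Y. \<forall>s\<in>{1..T}. Y s \<in> Lp M (F s) p \<and> (s < t \<longrightarrow> Y s = (\<lambda>x. 0))}"

end

theory Submission
  imports Defs
begin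

text \<open>Each one-step map $W_t$ is a normalized monetary utility: it maps $L^p(\mathcal F_{t+1})$
  into $L^p(\mathcal F_t)$, is monotone and cash-additive, and sends $0$ to $0$. For
  monotonicity, the only non-obvious point is that the discount factor $1/(1+\eta_t)$ lies in
  $[0,1]$, so the increase of $R_t(-Y)$ dominates the possible increase of the penalty term.
  These four properties are stable under composition, which gives the first three claims for
  $\phi_{t,T}$; and cash-additivity together with normalization makes every composite of the
  $W_s$ act as the identity on $L^p(\mathcal F_u)$, which gives time consistency once the
  composite from $t$ to $T$ is split at $u$.\<close>

lemma abs_add_powr_le:
  fixes a b q :: real
  assumes "q > 0"
  shows "\<bar>a + b\<bar> powr q \<le> 2 powr q * (\<bar>a\<bar> powr q + \<bar>b\<bar> powr q)"
proof -
  have "\<bar>a + b\<bar> powr q \<le> (2 * max \<bar>a\<bar> \<bar>b\<bar>) powr q"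
    using assms by (intro powr_mono2) auto
  also have "\<dots> = 2 powr q * max \<bar>a\<bar> \<bar>b\<bar> powr q" by (simp add: powr_mult)
  also have "max \<bar>a\<bar> \<bar>b\<bar> powr q \<le> \<bar>a\<bar> powr q + \<bar>b\<bar> powr q"
    by (cases "\<bar>a\<bar> \<le> \<bar>b\<bar>") (auto simp: max_def)
  finally show ?thesis by (simp add: mult_left_mono)
qed

lemma Lp_zero: "(\<lambda>x. 0) \<in> Lp M N p"
  unfolding Lp_def by (cases "p = \<infinity>") (auto simp: less_top[symmetric])

lemma Lp_subalgebra_mono: "subalgebra N' N \<Longrightarrow> Y \<in> Lp M N p \<Longrightarrow> Y \<in> Lp M N' p"
  unfolding Lp_def using measurable_from_subalg by blast

lemma Lp_dominated:
  assumes N: "subalgebra M N" and Y: "Y \<in> borel_measurable N" and Z: "Z \<in> Lp M N p"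
    and le: "AE x in M. \<bar>Y x\<bar> \<le> \<bar>Z x\<bar>"
  shows "Y \<in> Lp M N p"
proof -
  consider "p = 0" | "p = \<infinity> \<and> (\<exists>C. AE x in M. \<bar>Z x\<bar> \<le> C)"
    | "0 < p \<and> p < \<infinity> \<and> integrable M (\<lambda>x. \<bar>Z x\<bar> powr enn2real p)"
    using Z unfolding Lp_def by blast
  then show ?thesis
  proof cases
    case 1
    then show ?thesis using Y unfolding Lp_def by auto
  next
    case 2
    then obtain C where "AE x in M. \<bar>Z x\<bar> \<le> C" by auto
    with le have "AE x in M. \<bar>Y x\<bar> \<le> C" by eventually_elim auto
    then show ?thesis using Y 2 unfolding Lp_def by auto
  next
    case 3
    define q where "q = enn2real p"
    have q: "q > 0" using 3 by (simp add: q_def enn2real_positive_iff)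
    have "integrable M (\<lambda>x. \<bar>Y x\<bar> powr q)"
    proof (rule Bochner_Integration.integrable_bound)
      show "integrable M (\<lambda>x. \<bar>Z x\<bar> powr q)" using 3 by (simp add: q_def)
      show "(\<lambda>x. \<bar>Y x\<bar> powr q) \<in> borel_measurable M"
        using measurable_from_subalg[OF N Y] by measurable
      show "AE x in M. norm (\<bar>Y x\<bar> powr q) \<le> norm (\<bar>Z x\<bar> powr q)"
        using le by eventually_elim (use q in \<open>auto intro: powr_mono2\<close>)
    qed
    then show ?thesis using Y 3 unfolding Lp_def q_def by auto
  qed
qed

lemma Lp_uminus: "subalgebra M N \<Longrightarrow> Y \<in> Lp M N p \<Longrightarrow> (\<lambda>x. - Y x) \<in> Lp M N p"
  by (rule Lp_dominated) (auto simp: Lp_def)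

lemma Lp_max_0: "subalgebra M N \<Longrightarrow> Y \<in> Lp M N p \<Longrightarrow> (\<lambda>x. max (Y x) 0) \<in> Lp M N p"
  by (rule Lp_dominated[where Z = Y]) (auto simp: Lp_def)

lemma Lp_add:
  assumes N: "subalgebra M N" and Y: "Y \<in> Lp M N p" and Z: "Z \<in> Lp M N p"
  shows "(\<lambda>x. Y x + Z x) \<in> Lp M N p"
proof -
  have YN: "Y \<in> borel_measurable N" "Z \<in> borel_measurable N" using Y Z unfolding Lp_def by auto
  then have YM: "Y \<in> borel_measurable M" "Z \<in> borel_measurable M"
    using N measurable_from_subalg by blast+
  have sum: "(\<lambda>x. Y x + Z x) \<in> borel_measurable N" using YN by measurable
  consider "p = 0" | "p = \<infinity>" | "0 < p \<and> p < \<infinity>"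
    by (metis infinity_ennreal_def less_top not_gr_zero)
  then show ?thesis
  proof cases
    case 1
    then show ?thesis using sum unfolding Lp_def by auto
  next
    case 2
    then obtain C D where "AE x in M. \<bar>Y x\<bar> \<le> C" "AE x in M. \<bar>Z x\<bar> \<le> D"
      using Y Z unfolding Lp_def by auto
    then have "AE x in M. \<bar>Y x + Z x\<bar> \<le> C + D" by eventually_elim auto
    then show ?thesis using sum 2 unfolding Lp_def by auto
  next
    case 3
    define q where "q = enn2real p"
    have q: "q > 0" using 3 by (simp add: q_def enn2real_positive_iff)
    have "integrable M (\<lambda>x. \<bar>Y x\<bar> powr q)" "integrable M (\<lambda>x. \<bar>Z x\<bar> powr q)"
      using Y Z 3 unfolding Lp_def q_def by auto
    then have "integrable M (\<lambda>x. 2 powr q * (\<bar>Y x\<bar> powr q + \<bar>Z x\<bar> powr q))" by auto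
    then have "integrable M (\<lambda>x. \<bar>Y x + Z x\<bar> powr q)"
      by (rule Bochner_Integration.integrable_bound) (use YM abs_add_powr_le[OF q] in auto)
    then show ?thesis using sum 3 unfolding Lp_def q_def by auto
  qed
qed

lemma Lp_diff: "subalgebra M N \<Longrightarrow> Y \<in> Lp M N p \<Longrightarrow> Z \<in> Lp M N p \<Longrightarrow> (\<lambda>x. Y x - Z x) \<in> Lp M N p"
  using Lp_add[of M N Y p "\<lambda>x. - Z x"] Lp_uminus by auto

locale Lp_filtration =
  fixes M :: "'a measure" and F :: "nat \<Rightarrow> 'a measure" and T :: nat and p :: ennreal
  assumes filtered: "filtered_prob_space M F T"
begin

abbreviation L :: "nat \<Rightarrow> ('a \<Rightarrow> real) set" where "L s \<equiv> Lp M (F s) p"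

lemma subalgebra_F: "s \<le> T \<Longrightarrow> subalgebra M (F s)"
  using filtered unfolding filtered_prob_space_def subalgebra_def by auto

lemma L_mono: "s \<le> s' \<Longrightarrow> s' \<le> T \<Longrightarrow> Y \<in> L s \<Longrightarrow> Y \<in> L s'"
  using filtered unfolding filtered_prob_space_def
  by (intro Lp_subalgebra_mono[of "F s'" "F s"]) (auto simp: subalgebra_def)

lemma L_Suc: "s < T \<Longrightarrow> Y \<in> L s \<Longrightarrow> Y \<in> L (Suc s)"
  by (rule L_mono) auto

end

lemma AE_eq_if_AE_mono:
  fixes f :: "('a \<Rightarrow> 'b::order) \<Rightarrow> 'a \<Rightarrow> 'c::order"
  assumes mono: "\<And>Y Y'. Y \<in> A \<Longrightarrow> Y' \<in> A \<Longrightarrow> (AE x in M. Y x \<le> Y' x) \<Longrightarrow> AE x in M. f Y x \<le> f Y' x"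
    and "Y \<in> A" "Y' \<in> A" "AE x in M. Y x = Y' x"
  shows "AE x in M. f Y x = f Y' x"
proof -
  have le: "AE x in M. Y x \<le> Y' x" "AE x in M. Y' x \<le> Y x"
    using assms(4) by (auto elim!: eventually_mono)
  have "AE x in M. f Y x \<le> f Y' x" "AE x in M. f Y' x \<le> f Y x"
    using mono[OF assms(2,3) le(1)] mono[OF assms(3,2) le(2)] .
  then show ?thesis by eventually_elim auto
qed

lemma Witer_add: "Witer W t (a + b) Z = Witer W t a (Witer W (t + a) b Z)"
  by (induction a arbitrary: t) simp_all

locale monetary_family = Lp_filtration +
  fixes W :: "nat \<Rightarrow> ('a \<Rightarrow> real) \<Rightarrow> 'a \<Rightarrow> real"
  assumes W_Lp: "s < T \<Longrightarrow> Y \<in> Lp M (F (Suc s)) p \<Longrightarrow> W s Y \<in> Lp M (F s) p"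
    and W_mono: "s < T \<Longrightarrow> Y \<in> Lp M (F (Suc s)) p \<Longrightarrow> Y' \<in> Lp M (F (Suc s)) p \<Longrightarrow>
      (AE x in M. Y x \<le> Y' x) \<Longrightarrow> AE x in M. W s Y x \<le> W s Y' x"
    and W_cash: "s < T \<Longrightarrow> Y \<in> Lp M (F (Suc s)) p \<Longrightarrow> m \<in> Lp M (F s) p \<Longrightarrow>
      AE x in M. W s (\<lambda>w. Y w + m w) x = W s Y x + m x"
    and W_zero: "s < T \<Longrightarrow> AE x in M. W s (\<lambda>w. 0) x = 0"
begin

lemma W_cong: "s < T \<Longrightarrow> Y \<in> L (Suc s) \<Longrightarrow> Y' \<in> L (Suc s) \<Longrightarrow> (AE x in M. Y x = Y' x) \<Longrightarrow>
    AE x in M. W s Y x = W s Y' x"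
  by (rule AE_eq_if_AE_mono[where A = "L (Suc s)" and f = "W s", OF W_mono])

lemma W_const: assumes s: "s < T" and m: "m \<in> L s" shows "AE x in M. W s m x = m x"
  using W_cash[OF s Lp_zero m] W_zero[OF s] by eventually_elim simp

lemma Witer_Lp: "t + k \<le> T \<Longrightarrow> Z \<in> L (t + k) \<Longrightarrow> Witer W t k Z \<in> L t"
  by (induction k arbitrary: t) (auto intro: W_Lp)

lemma Witer_mono: "t + k \<le> T \<Longrightarrow> Z \<in> L (t + k) \<Longrightarrow> Z' \<in> L (t + k) \<Longrightarrow>
    (AE x in M. Z x \<le> Z' x) \<Longrightarrow> AE x in M. Witer W t k Z x \<le> Witer W t k Z' x"
proof (induction k arbitrary: t)
  case (Suc k)
  then have "AE x in M. Witer W (Suc t) k Z x \<le> Witer W (Suc t) k Z' x" by simp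
  then show ?case
    unfolding Witer.simps comp_apply by (rule W_mono[rotated 3]) (use Suc.prems Witer_Lp[of "Suc t" k] in auto)
qed simp

lemma Witer_cong: "t + k \<le> T \<Longrightarrow> Z \<in> L (t + k) \<Longrightarrow> Z' \<in> L (t + k) \<Longrightarrow>
    (AE x in M. Z x = Z' x) \<Longrightarrow> AE x in M. Witer W t k Z x = Witer W t k Z' x"
  by (rule AE_eq_if_AE_mono[where A = "L (t + k)" and f = "Witer W t k", OF Witer_mono])

lemma Witer_cash: "t + k \<le> T \<Longrightarrow> Z \<in> L (t + k) \<Longrightarrow> m \<in> L t \<Longrightarrow>
    AE x in M. Witer W t k (\<lambda>w. Z w + m w) x = Witer W t k Z x + m x"
proof (induction k arbitrary: t)
  case (Suc k)
  have m: "m \<in> L (Suc t)" "m \<in> L (t + Suc k)"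
    using L_mono[of t "Suc t"] L_mono[of t "t + Suc k"] Suc.prems by auto
  have Zm: "(\<lambda>w. Z w + m w) \<in> L (t + Suc k)" by (intro Lp_add subalgebra_F) (use Suc.prems m in auto)
  have V: "Witer W (Suc t) k Z \<in> L (Suc t)" using Witer_Lp[of "Suc t" k] Suc.prems by auto
  have "AE x in M. W t (Witer W (Suc t) k (\<lambda>w. Z w + m w)) x
      = W t (\<lambda>w. Witer W (Suc t) k Z w + m w) x"
    using Suc.prems m Zm V Witer_Lp[of "Suc t" k]
    by (intro W_cong Suc.IH Lp_add[OF subalgebra_F]) auto
  moreover have "AE x in M. W t (\<lambda>w. Witer W (Suc t) k Z w + m w) x = W t (Witer W (Suc t) k Z) x + m x"
    using W_cash V Suc.prems by auto
  ultimately show ?case by eventually_elim simp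
qed simp

lemma Witer_const: "t + k \<le> T \<Longrightarrow> m \<in> L t \<Longrightarrow> AE x in M. Witer W t k m x = m x"
proof (induction k arbitrary: t)
  case (Suc k)
  have m: "m \<in> L (Suc t)" using L_mono[of t "Suc t"] Suc.prems by auto
  have "AE x in M. W t (Witer W (Suc t) k m) x = W t m x"
    using Suc Witer_Lp[of "Suc t" k m] L_mono[of t "Suc t + k" m] m by (intro W_cong) auto
  moreover have "AE x in M. W t m x = m x" using W_const Suc.prems by auto
  ultimately show ?case by eventually_elim simp
qed simp

end

locale risk_utility = Lp_filtration +
  fixes R U :: "nat \<Rightarrow> ('a \<Rightarrow> real) \<Rightarrow> ('a \<Rightarrow> real)" and \<eta> :: "nat \<Rightarrow> 'a \<Rightarrow> real"
  assumes risk: "dyn_risk_measure M F T p R"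
    and utility: "dyn_utility M F T p U"
    and eta: "\<forall>s<T. \<eta> s \<in> borel_measurable (F s) \<and> (AE x in M. \<eta> s x > 0)"
begin

lemma R_Lp: "s < T \<Longrightarrow> Y \<in> L (Suc s) \<Longrightarrow> R s Y \<in> L s"
  using risk unfolding dyn_risk_measure_def by blast

lemma R_cash: "s < T \<Longrightarrow> Y \<in> L (Suc s) \<Longrightarrow> l \<in> L s \<Longrightarrow>
    AE x in M. R s (\<lambda>w. Y w + l w) x = R s Y x - l x"
  using risk unfolding dyn_risk_measure_def by blast

lemma R_antimono: "s < T \<Longrightarrow> Y \<in> L (Suc s) \<Longrightarrow> Y' \<in> L (Suc s) \<Longrightarrow>
    (AE x in M. Y x \<le> Y' x) \<Longrightarrow> AE x in M. R s Y' x \<le> R s Y x"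
  using risk unfolding dyn_risk_measure_def by blast

lemma R_pos_homogeneous: "s < T \<Longrightarrow> Y \<in> L (Suc s) \<Longrightarrow> c \<in> L s \<Longrightarrow> (AE x in M. c x \<ge> 0) \<Longrightarrow>
    (\<lambda>w. c w * Y w) \<in> L (Suc s) \<Longrightarrow> AE x in M. R s (\<lambda>w. c w * Y w) x = c x * R s Y x"
  using risk unfolding dyn_risk_measure_def by blast

lemma R_zero: "s < T \<Longrightarrow> AE x in M. R s (\<lambda>w. 0) x = 0"
  using R_pos_homogeneous[of s "\<lambda>w. 0" "\<lambda>w. 0"] by (simp add: Lp_zero)

lemma U_Lp: "s < T \<Longrightarrow> Y \<in> L (Suc s) \<Longrightarrow> U s Y \<in> L s"
  using utility unfolding dyn_utility_def by blast

lemma U_cash: "s < T \<Longrightarrow> Y \<in> L (Suc s) \<Longrightarrow> l \<in> L s \<Longrightarrow>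
    AE x in M. U s (\<lambda>w. Y w + l w) x = U s Y x + l x"
  using utility unfolding dyn_utility_def by blast

lemma U_mono: "s < T \<Longrightarrow> Y \<in> L (Suc s) \<Longrightarrow> Y' \<in> L (Suc s) \<Longrightarrow>
    (AE x in M. Y x \<le> Y' x) \<Longrightarrow> AE x in M. U s Y x \<le> U s Y' x"
  using utility unfolding dyn_utility_def by blast

lemma U_cong: "s < T \<Longrightarrow> Y \<in> L (Suc s) \<Longrightarrow> Y' \<in> L (Suc s) \<Longrightarrow> (AE x in M. Y x = Y' x) \<Longrightarrow>
    AE x in M. U s Y x = U s Y' x"
  by (rule AE_eq_if_AE_mono[where A = "L (Suc s)" and f = "U s", OF U_mono])

lemma U_pos_homogeneous: "s < T \<Longrightarrow> Y \<in> L (Suc s) \<Longrightarrow> c \<in> L s \<Longrightarrow> (AE x in M. c x \<ge> 0) \<Longrightarrow>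
    (\<lambda>w. c w * Y w) \<in> L (Suc s) \<Longrightarrow> AE x in M. U s (\<lambda>w. c w * Y w) x = c x * U s Y x"
  using utility unfolding dyn_utility_def by blast

lemma U_zero: "s < T \<Longrightarrow> AE x in M. U s (\<lambda>w. 0) x = 0"
  using U_pos_homogeneous[of s "\<lambda>w. 0" "\<lambda>w. 0"] by (simp add: Lp_zero)

lemma discount_measurable: "s < T \<Longrightarrow> (\<lambda>x. 1 / (1 + \<eta> s x)) \<in> borel_measurable (F s)"
  using eta by auto

lemma discount_bounds: "s < T \<Longrightarrow> AE x in M. 0 \<le> 1 / (1 + \<eta> s x) \<and> 1 / (1 + \<eta> s x) \<le> 1"
  using eta by (auto elim!: eventually_mono)

lemma R_uminus_Lp: "s < T \<Longrightarrow> Y \<in> L (Suc s) \<Longrightarrow> R s (\<lambda>v. - Y v) \<in> L s"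
  by (intro R_Lp Lp_uminus subalgebra_F) auto

lemma shortfall_Lp:
  assumes s: "s < T" and Y: "Y \<in> L (Suc s)"
  shows "(\<lambda>w. max (R s (\<lambda>v. - Y v) w - Y w) 0) \<in> L (Suc s)"
proof -
  have N: "subalgebra M (F (Suc s))" using subalgebra_F s by simp
  have "R s (\<lambda>v. - Y v) \<in> L (Suc s)" using L_Suc[OF s R_uminus_Lp[OF s Y]] .
  then show ?thesis using N Y by (intro Lp_max_0 Lp_diff)
qed

lemma Wmap_Lp: assumes s: "s < T" and Y: "Y \<in> L (Suc s)" shows "Wmap R U \<eta> s Y \<in> L s"
proof -
  have N: "subalgebra M (F s)" using subalgebra_F s by simp
  define V where "V = U s (\<lambda>w. max (R s (\<lambda>v. - Y v) w - Y w) 0)"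
  have V: "V \<in> L s" unfolding V_def using U_Lp shortfall_Lp s Y by blast
  then have "V \<in> borel_measurable (F s)" unfolding Lp_def by blast
  then have "(\<lambda>x. 1 / (1 + \<eta> s x) * V x) \<in> borel_measurable (F s)"
    using discount_measurable[OF s] by measurable
  moreover have "AE x in M. \<bar>1 / (1 + \<eta> s x) * V x\<bar> \<le> \<bar>V x\<bar>"
    using discount_bounds[OF s]
    by eventually_elim (metis abs_ge_zero abs_mult abs_of_nonneg mult_left_le_one_le)
  ultimately have "(\<lambda>x. 1 / (1 + \<eta> s x) * V x) \<in> L s" by (rule Lp_dominated[OF N _ V])
  moreover have "R s (\<lambda>v. - Y v) \<in> L s" using R_uminus_Lp s Y by blast
  ultimately show ?thesis unfolding Wmap_def V_def using Lp_diff[OF N] by blast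
qed

lemma Wmap_mono:
  assumes s: "s < T" and Y: "Y \<in> L (Suc s)" and Y': "Y' \<in> L (Suc s)"
    and le: "AE x in M. Y x \<le> Y' x"
  shows "AE x in M. Wmap R U \<eta> s Y x \<le> Wmap R U \<eta> s Y' x"
proof -
  have N: "subalgebra M (F (Suc s))" using subalgebra_F s by simp
  define \<rho> \<rho>' where "\<rho> = R s (\<lambda>w. - Y w)" and "\<rho>' = R s (\<lambda>w. - Y' w)"
  define A A' where "A = (\<lambda>w. max (\<rho> w - Y w) 0)" and "A' = (\<lambda>w. max (\<rho>' w - Y' w) 0)"
  define \<delta> where "\<delta> = (\<lambda>w. \<rho>' w - \<rho> w)"
  have \<rho>: "\<rho> \<in> L s" "\<rho>' \<in> L s" unfolding \<rho>_def \<rho>'_def using R_uminus_Lp s Y Y' by auto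
  have \<delta>: "\<delta> \<in> L s" unfolding \<delta>_def by (intro Lp_diff subalgebra_F) (use s \<rho> in auto)
  have A: "A \<in> L (Suc s)" "A' \<in> L (Suc s)"
    unfolding A_def A'_def \<rho>_def \<rho>'_def using shortfall_Lp s Y Y' by auto
  have \<rho>_le: "AE x in M. \<rho> x \<le> \<rho>' x"
    unfolding \<rho>_def \<rho>'_def using le Y Y' N s
    by (intro R_antimono Lp_uminus) (auto elim!: eventually_mono)
  have "AE x in M. A' x \<le> A x + \<delta> x"
    using \<rho>_le le by eventually_elim (auto simp: A_def A'_def \<delta>_def)
  then have "AE x in M. U s A' x \<le> U s (\<lambda>w. A w + \<delta> w) x"
    by (rule U_mono[rotated 3]) (use s A Lp_add[OF N A(1) L_Suc[OF s \<delta>]] in auto)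
  moreover have "AE x in M. U s (\<lambda>w. A w + \<delta> w) x = U s A x + \<delta> x" using U_cash s A \<delta> by blast
  ultimately have U_le: "AE x in M. U s A' x \<le> U s A x + (\<rho>' x - \<rho> x)"
    unfolding \<delta>_def by eventually_elim simp
  have discounted_le: "r - c * a \<le> r' - c * a'"
    if "0 \<le> c" "c \<le> 1" "r \<le> r'" "a' \<le> a + (r' - r)" for c r r' a a' :: real
  proof -
    have "c * a' \<le> c * a + c * (r' - r)" using that by (simp add: mult_left_mono flip: distrib_left)
    also have "c * (r' - r) \<le> r' - r" using that by (intro mult_left_le_one_le) auto
    finally show ?thesis by simp
  qed
  have "AE x in M. \<rho> x - 1 / (1 + \<eta> s x) * U s A x \<le> \<rho>' x - 1 / (1 + \<eta> s x) * U s A' x"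
    using \<rho>_le U_le discount_bounds[OF s] by eventually_elim (blast intro: discounted_le)
  then show ?thesis unfolding Wmap_def \<rho>_def \<rho>'_def A_def A'_def .
qed

lemma Wmap_cash:
  assumes s: "s < T" and Y: "Y \<in> L (Suc s)" and m: "m \<in> L s"
  shows "AE x in M. Wmap R U \<eta> s (\<lambda>w. Y w + m w) x = Wmap R U \<eta> s Y x + m x"
proof -
  have N: "subalgebra M (F (Suc s))" "subalgebra M (F s)" using subalgebra_F s by auto
  have Ym: "(\<lambda>w. Y w + m w) \<in> L (Suc s)" using Lp_add N Y L_Suc[OF s m] by blast
  define \<rho> \<rho>m where "\<rho> = R s (\<lambda>w. - Y w)" and "\<rho>m = R s (\<lambda>w. - (Y w + m w))"
  have "AE x in M. R s (\<lambda>w. - Y w + - m w) x = \<rho> x - - m x"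
    unfolding \<rho>_def using R_cash s Y m Lp_uminus N by blast
  then have \<rho>m: "AE x in M. \<rho>m x = \<rho> x + m x" unfolding \<rho>m_def by simp
  have "AE x in M. U s (\<lambda>w. max (\<rho>m w - (Y w + m w)) 0) x = U s (\<lambda>w. max (\<rho> w - Y w) 0) x"
    using \<rho>m shortfall_Lp[OF s Y] shortfall_Lp[OF s Ym]
    by (intro U_cong s) (auto simp: \<rho>_def \<rho>m_def elim!: eventually_mono)
  with \<rho>m show ?thesis unfolding Wmap_def \<rho>_def \<rho>m_def by eventually_elim simp
qed

lemma Wmap_zero: assumes s: "s < T" shows "AE x in M. Wmap R U \<eta> s (\<lambda>w. 0) x = 0"
proof -
  have "AE x in M. U s (\<lambda>w. max (R s (\<lambda>v. - 0) w - 0) 0) x = U s (\<lambda>w. 0) x"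
    using R_zero[OF s] shortfall_Lp[OF s Lp_zero]
    by (intro U_cong s Lp_zero) (auto elim!: eventually_mono)
  then show ?thesis
    using R_zero[OF s] U_zero[OF s] unfolding Wmap_def by eventually_elim auto
qed

sublocale monetary_family M F T p "Wmap R U \<eta>"
  by unfold_locales (fact Wmap_Lp Wmap_mono Wmap_cash Wmap_zero)+

abbreviation \<phi> :: "nat \<Rightarrow> (nat \<Rightarrow> 'a \<Rightarrow> real) \<Rightarrow> 'a \<Rightarrow> real" where "\<phi> \<equiv> phi R U \<eta> T"

lemma phi_zero: "t \<le> T \<Longrightarrow> AE x in M. \<phi> t (\<lambda>s x. 0) x = 0"
  using Witer_const[of t "T - t" "\<lambda>x. 0"] Lp_zero unfolding phi_def by (auto elim!: eventually_mono)

lemma phi_mono: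
  assumes "t \<le> T" "Y T \<in> L T" "Y' T \<in> L T" "AE x in M. Y T x \<le> Y' T x"
  shows "AE x in M. \<phi> t Y x \<le> \<phi> t Y' x"
  using assms Witer_mono[of t "T - t" "\<lambda>w. - Y' T w" "\<lambda>w. - Y T w"] Lp_uminus[OF subalgebra_F]
  unfolding phi_def by (auto elim!: eventually_mono)

lemma phi_cash:
  assumes "t \<le> T" "Y T \<in> L T" "m \<in> L t"
  shows "AE x in M. \<phi> t (\<lambda>s w. Y s w + (if t \<le> s \<and> s \<le> T then m w else 0)) x = \<phi> t Y x + m x"
  using assms Witer_cash[of t "T - t" "\<lambda>w. - Y T w" "\<lambda>w. - m w"] Lp_uminus[OF subalgebra_F]
  unfolding phi_def by (auto elim!: eventually_mono)

lemma phi_time_consistent: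
  assumes tu: "t \<le> u" "u \<le> T" and Y: "Y T \<in> L T"
  shows "AE x in M. \<phi> t Y x = \<phi> t (\<lambda>s w. (if t \<le> s \<and> s < u then Y s w else 0)
                                    + (if u \<le> s \<and> s \<le> T then \<phi> u Y w else 0)) x"
proof -
  define V where "V = Witer (Wmap R U \<eta>) u (T - u) (\<lambda>w. - Y T w)"
  have split: "Witer (Wmap R U \<eta>) t (T - t) Z = Witer (Wmap R U \<eta>) t (u - t) (Witer (Wmap R U \<eta>) u (T - u) Z)"
    for Z using Witer_add[of _ t "u - t" "T - u"] tu by simp
  have V: "V \<in> L u" unfolding V_def using tu Y Lp_uminus[OF subalgebra_F] by (intro Witer_Lp) auto
  have "AE x in M. Witer (Wmap R U \<eta>) t (u - t) (Witer (Wmap R U \<eta>) u (T - u) V) x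
      = Witer (Wmap R U \<eta>) t (u - t) V x"
    using tu V Witer_const[of u "T - u" V] Witer_Lp[of u "T - u" V] L_mono[of u T V]
    by (intro Witer_cong) auto
  then show ?thesis using tu unfolding phi_def split V_def by (auto elim!: eventually_mono)
qed

end

theorem proposition3:
  fixes M :: "'a measure" and F :: "nat \<Rightarrow> 'a measure" and T t :: nat and p :: ennreal
    and R U :: "nat \<Rightarrow> ('a \<Rightarrow> real) \<Rightarrow> ('a \<Rightarrow> real)" and \<eta> :: "nat \<Rightarrow> 'a \<Rightarrow> real"
  assumes "T \<ge> 1"
    and "filtered_prob_space M F T"
    and "dyn_risk_measure M F T p R"
    and "dyn_utility M F T p U"
    and "\<forall>s<T. \<eta> s \<in> borel_measurable (F s) \<and> (AE x in M. \<eta> s x > 0)"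
    and "1 \<le> t" and "t \<le> T"
  shows "(AE x in M. phi R U \<eta> T t (\<lambda>s x. 0) x = 0)
    \<and> (\<forall>Y\<in>Rp M F p T t. \<forall>Y'\<in>Rp M F p T t.
          (\<forall>s\<in>{1..T}. AE x in M. Y s x \<le> Y' s x) \<longrightarrow>
          (AE x in M. phi R U \<eta> T t Y x \<le> phi R U \<eta> T t Y' x))
    \<and> (\<forall>Y\<in>Rp M F p T t. \<forall>m\<in>Lp M (F t) p.
          AE x in M. phi R U \<eta> T t (\<lambda>s w. Y s w + (if t \<le> s \<and> s \<le> T then m w else 0)) x
                     = phi R U \<eta> T t Y x + m x)
    \<and> (\<forall>u. t \<le> u \<and> u \<le> T \<longrightarrow> (\<forall>Y\<in>Rp M F p T t.
          AE x in M. phi R U \<eta> T t Y x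
            = phi R U \<eta> T t (\<lambda>s w. (if t \<le> s \<and> s < u then Y s w else 0)
                                   + (if u \<le> s \<and> s \<le> T then phi R U \<eta> T u Y w else 0)) x))"
proof -
  interpret risk_utility M F T p R U \<eta>
    using assms by unfold_locales auto
  have terminal: "Y T \<in> Lp M (F T) p" if "Y \<in> Rp M F p T t" for Y
    using that \<open>T \<ge> 1\<close> unfolding Rp_def by auto
  show ?thesis
    using \<open>t \<le> T\<close> \<open>T \<ge> 1\<close> terminal
    by (auto intro: phi_zero phi_mono phi_cash phi_time_consistent)
qed

end
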